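(* For all $a\in\mathbb F_{3^m}^*$ and $b\in\mathbb F_{3^{2m}}$, the vector $(\mathrm{Tr}_{2m}(at^{3^m+1})\,\mathrm{Tr}_{2m}(bt))_{t\in\mathbb F_{3^{2m}}}$ belongs to $\mathcal C_3(\mathbb D_d)$.
   Context: Let $m\ge 2$ be an integer. For $s\in\{m,2m\}$ let $\mathrm{Tr}_s:\mathbb F_{3^s}\to\mathbb F_3$ denote the absolute trace. Vectors in $\mathbb F_3^{3^{2m}}$ are indexed by $\mathbb F_{3^{2m}}$, and a function $f:\mathbb F_{3^{2m}}\to\mathbb F_3$ is identified with $(f(t))_{t\in\mathbb F_{3^{2m}}}$. Let $\mathcal C(2m,3)=\{(\mathrm{Tr}_{2m}(at^{3^m+1}+bt)+h)_{t\in\mathbb F_{3^{2m}}}: a\in\mathbb F_{3^m}, b\in\mathbb F_{3^{2m}}, h\in\mathbb F_3\}$, let $d$ be its minimum nonzero Hamming weight, let $\mathbb D_d$ be the incidence structure on $\mathbb F_{3^{2m}}$ whose blocks are the supports of the weight-$d$ codewords, and let $\mathcal C_3(\mathbb D_d)$ be the $\mathbb F_3$-span of the incidence vectors of the blocks (entry $1$ on the block, $0$ elsewhere). *)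

theory Defs
  imports Main "HOL-Library.Cardinality"
begin

text \<open>The field F_{3^{2m}} is modelled by a finite field type 'a of cardinality 3^(2m)
  (characteristic 3). The prime field F_3 is identified with the subfield {x. x^3 = x} of 'a,
  and F_{3^m} with the subfield {x. x^(3^m) = x}. Vectors indexed by F_{3^{2m}} with entries
  in F_3 are functions 'a => 'a taking values in the prime subfield.\<close>

definition prime_subfield :: "'a::field set" where
  "prime_subfield = {x. x ^ 3 = x}"

definition subfield_pm :: "nat \<Rightarrow> 'a::field set" where
  "subfield_pm m = {x. x ^ (3 ^ m) = x}"

definition trace3 :: "nat \<Rightarrow> 'a::field \<Rightarrow> 'a" where
  "trace3 s x = (\<Sum>i<s. x ^ (3 ^ i))"

definition code_C :: "nat \<Rightarrow> ('a::{field,finite} \<Rightarrow> 'a) set" where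
  "code_C m = {(\<lambda>t. trace3 (2*m) (a * t ^ (3 ^ m + 1) + b * t) + h) | a b h.
                 a \<in> subfield_pm m \<and> h \<in> prime_subfield}"

definition hweight :: "('a::finite \<Rightarrow> 'b::zero) \<Rightarrow> nat" where
  "hweight c = card {t. c t \<noteq> 0}"

definition min_weight :: "'a::{field,finite} itself \<Rightarrow> nat \<Rightarrow> nat" where
  "min_weight (_::'a itself) m = (LEAST w. \<exists>c\<in>(code_C m :: ('a::{field,finite} \<Rightarrow> 'a) set). c \<noteq> (\<lambda>_. 0) \<and> hweight c = w)"

definition blocks_Dd :: "nat \<Rightarrow> ('a::{field,finite}) set set" where
  "blocks_Dd m = {{t. c t \<noteq> 0} | c. c \<in> (code_C m :: ('a \<Rightarrow> 'a) set) \<and> c \<noteq> (\<lambda>_. 0)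
                   \<and> hweight c = min_weight TYPE('a) m}"

definition incidence_vec :: "'a set \<Rightarrow> ('a \<Rightarrow> 'b::{zero,one})" where
  "incidence_vec B = (\<lambda>t. if t \<in> B then 1 else 0)"

text \<open>F_3-span of the incidence vectors of the blocks (the set of blocks is finite).\<close>
definition design_code :: "nat \<Rightarrow> ('a::{field,finite} \<Rightarrow> 'a) set" where
  "design_code m = {(\<lambda>t. \<Sum>B\<in>blocks_Dd m. k B * incidence_vec B t) | k.
                      \<forall>B. k B \<in> prime_subfield}"

end

theory Submission
  imports Defs "HOL-Number_Theory.Residues" "HOL-Computational_Algebra.Polynomial"
begin

text \<open>Write \<open>q = 3\<^sup>m\<close>, \<open>n = q\<^sup>2\<close> and \<open>T = Tr\<^sub>2\<^sub>m\<close>. Expanding \<open>(t + s)\<^bsup>q+1\<^esup>\<close> and using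
  the Frobenius invariance of \<open>T\<close> gives \<open>T(a(t+s)\<^bsup>q+1\<^esup>) = T(at\<^bsup>q+1\<^esup>) + T(2as\<^sup>q t) + T(as\<^bsup>q+1\<^esup>)\<close>,
  so for \<open>a \<noteq> 0\<close> every codeword is a translate of \<open>T(at\<^bsup>q+1\<^esup>) + e\<close>. Counting the level sets
  of \<open>T(at\<^bsup>q+1\<^esup>)\<close> through the fibres of the norm \<open>t \<mapsto> t\<^bsup>q+1\<^esup>\<close> (of size \<open>q + 1\<close> over
  \<open>\<bbbF>\<^sub>q\<^sup>*\<close>) and the equidistribution of \<open>T\<close> on \<open>\<bbbF>\<^sub>q\<close> gives these codewords weight
  \<open>(2n - q)/3\<close> for \<open>e \<noteq> 0\<close> and \<open>(2n + 2q)/3\<close> for \<open>e = 0\<close>; the affine codewords have weight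
  \<open>2n/3\<close> or \<open>n\<close>. Hence \<open>d = (2n - q)/3\<close>, and the supports of \<open>T(a(t+s)\<^bsup>q+1\<^esup>) \<plusminus> 1\<close> are blocks.
  For an \<open>\<bbbF>\<^sub>3\<close>-valued \<open>f\<close> the incidence vector of its support is \<open>f\<^sup>2\<close>. With \<open>Q = T(at\<^bsup>q+1\<^esup>)\<close>,
  \<open>L = T(bt)\<close>, \<open>s = (b/2a)\<^sup>q\<close> and \<open>c = T(a(b/2a)\<^bsup>q+1\<^esup>)\<close>, the shifts by \<open>\<plusminus>s\<close> turn \<open>Q\<close> into
  \<open>Q \<plusminus> L + c\<close>, and the identity
  \<open>QL = (c - 1)(Q + L + c + 1)\<^sup>2 - (c + 1)(Q + L + c - 1)\<^sup>2 + (1 - c)(Q - L + c + 1)\<^sup>2 + (1 + c)(Q - L + c - 1)\<^sup>2\<close>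
  over \<open>\<bbbF>\<^sub>3\<close> writes the product as a combination of four block incidence vectors.\<close>

lemma sum_lessThan_add:
  fixes a b :: nat
  shows "(\<Sum>i<a + b. f i) = (\<Sum>i<a. f i) + (\<Sum>i<b. f (a + i) :: 'b::comm_monoid_add)"
  by (induction b) (simp_all add: add.assoc)

lemma three_mult_three_pow_le: "1 \<le> m \<Longrightarrow> 3 * 3 ^ m \<le> (3::nat) ^ (2 * m)"
  using power_increasing[of "Suc m" "2 * m" "3::nat"] by simp

lemma prime_subfield_iff: "(x::'a::field) \<in> prime_subfield \<longleftrightarrow> x = 0 \<or> x = 1 \<or> x = -1"
proof -
  have "x ^ 3 - x = x * (x - 1) * (x + 1)"
    by (simp add: power3_eq_cube algebra_simps)
  then have "x ^ 3 = x \<longleftrightarrow> x * (x - 1) * (x + 1) = 0"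
    by (metis eq_iff_diff_eq_0)
  then show ?thesis
    unfolding prime_subfield_def by (auto simp: add_eq_0_iff minus_equation_iff)
qed

lemma zero_in_prime_subfield [simp]: "(0::'a::field) \<in> prime_subfield"
  and one_in_prime_subfield [simp]: "(1::'a) \<in> prime_subfield"
  and minus_one_in_prime_subfield [simp]: "(-1::'a) \<in> prime_subfield"
  by (simp_all add: prime_subfield_iff)

lemma prime_subfield_minus: "(x::'a::field) \<in> prime_subfield \<Longrightarrow> - x \<in> prime_subfield"
  by (auto simp: prime_subfield_iff)

lemma prime_subfield_power2: "(x::'a::field) \<in> prime_subfield \<Longrightarrow> x ^ 2 = (if x = 0 then 0 else 1)"
  by (auto simp: prime_subfield_iff)

lemma incidence_vec_support:
  assumes "(f t :: 'a::field) \<in> prime_subfield"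
  shows "incidence_vec {t. f t \<noteq> 0} t = f t ^ 2"
  using prime_subfield_power2[OF assms] by (simp add: incidence_vec_def)

lemma power_three_pow_minus: "(- x :: 'a::ring_1) ^ 3 ^ k = - (x ^ 3 ^ k)"
  by (simp add: power_minus_odd)

lemma trace3_0 [simp]: "trace3 s (0::'a::field) = 0"
  by (simp add: trace3_def power_0_left)

lemma trace3_minus: "trace3 s (- x :: 'a::field) = - trace3 s x"
  by (simp add: trace3_def power_three_pow_minus sum_negf)

lemma subfield_pm_minus: "x \<in> subfield_pm m \<Longrightarrow> - (x::'a::field) \<in> subfield_pm m"
  by (simp add: subfield_pm_def power_three_pow_minus)

lemma subfield_pm_divide:
  "x \<in> subfield_pm m \<Longrightarrow> y \<in> subfield_pm m \<Longrightarrow> (x / y :: 'a::field) \<in> subfield_pm m"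
  by (simp add: subfield_pm_def power_divide)

lemma hweight_add_card_zeros:
  fixes c :: "'a::finite \<Rightarrow> 'b::zero"
  shows "hweight c + card {t. c t = 0} = CARD('a)"
proof -
  have "card ({t. c t \<noteq> 0} \<union> {t. c t = 0}) = card {t. c t \<noteq> 0} + card {t. c t = 0}"
    by (rule card_Un_disjoint) auto
  moreover have "{t. c t \<noteq> 0} \<union> {t. c t = 0} = UNIV"
    by auto
  ultimately show ?thesis
    by (simp add: hweight_def)
qed

lemma hweight_eq_0_iff: "hweight c = 0 \<longleftrightarrow> c = (\<lambda>_. 0)"
  for c :: "'a::finite \<Rightarrow> 'b::zero"
  by (auto simp: hweight_def)

lemma hweight_translate: "hweight (\<lambda>t. f (t + s)) = hweight (f :: 'a::{finite,group_add} \<Rightarrow> 'b::zero)"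
proof -
  have "bij_betw (\<lambda>t. t + s) {t. f (t + s) \<noteq> 0} {u. f u \<noteq> 0}"
    by (rule bij_betwI[where g = "\<lambda>u. u - s"]) auto
  then show ?thesis
    unfolding hweight_def by (rule bij_betw_same_card)
qed

lemma card_roots_le_if_coeff_nonzero:
  fixes p :: "'a::idom poly"
  assumes "coeff p j \<noteq> 0" and "degree p \<le> j"
  shows "card {x. poly p x = 0} \<le> j"
  using assms card_poly_roots_bound[of p] by fastforce

lemma card_power_eq_poly_le:
  fixes r :: "'a::idom poly"
  assumes "degree r < j"
  shows "card {x. x ^ j = poly r x} \<le> j"
proof -
  let ?p = "monom 1 j - r"
  have "{x. x ^ j = poly r x} = {x. poly ?p x = 0}"
    by (simp add: poly_monom)
  moreover have "coeff ?p j \<noteq> 0"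
    using assms by (simp add: coeff_eq_0)
  moreover have "degree ?p \<le> j"
    using assms by (intro degree_diff_le) (simp_all add: degree_monom_eq)
  ultimately show ?thesis
    using card_roots_le_if_coeff_nonzero by metis
qed

lemma card_power_eq_le:
  assumes "1 \<le> j"
  shows "card {x::'a::idom. x ^ j = u} \<le> j"
  using card_power_eq_poly_le[of "[:u:]" j] assms by simp

lemma card_subfield_pm_le:
  assumes "1 \<le> m"
  shows "card (subfield_pm m :: 'a::field set) \<le> 3 ^ m"
proof -
  have "1 < (3::nat) ^ m"
    using assms by (intro one_less_power) auto
  then show ?thesis
    using card_power_eq_poly_le[of "[:0, 1:]" "3 ^ m"] by (simp add: subfield_pm_def)
qed

lemma card_sum_power_three_pow_eq_0_le:
  assumes "1 \<le> k"
  shows "card {x::'a::idom. (\<Sum>i<k. x ^ 3 ^ i) = 0} \<le> 3 ^ (k - 1)"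
proof -
  let ?p = "\<Sum>i<k. monom (1::'a) (3 ^ i)"
  have "{x::'a. (\<Sum>i<k. x ^ 3 ^ i) = 0} = {x. poly ?p x = 0}"
    by (simp add: poly_sum poly_monom)
  moreover have "coeff ?p (3 ^ (k - 1)) \<noteq> 0"
  proof -
    have "coeff ?p (3 ^ (k - 1)) = (\<Sum>i<k. if i = k - 1 then 1 else 0)"
      unfolding coeff_sum coeff_monom by (intro sum.cong) auto
    then show ?thesis
      using assms by simp
  qed
  moreover have "degree ?p \<le> 3 ^ (k - 1)"
    by (intro degree_sum_le) (auto simp: degree_monom_eq intro: power_increasing)
  ultimately show ?thesis
    using card_roots_le_if_coeff_nonzero by metis
qed

context
  assumes char3: "CHAR('a::field) = 3"
begin

lemma three_eq_0: "(3::'a) = 0"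
  using of_nat_CHAR[where 'a='a] char3 by simp

lemma two_eq_minus_one: "(2::'a) = -1"
  using three_eq_0 by (simp add: eq_neg_iff_add_eq_0)

lemma power_three_pow_add: "(x + y :: 'a) ^ 3 ^ k = x ^ 3 ^ k + y ^ 3 ^ k"
  by (rule freshmans_dream') (simp_all add: char3)

lemma power_three_pow_sum: "(sum f A :: 'a) ^ 3 ^ k = (\<Sum>i\<in>A. f i ^ 3 ^ k)"
  by (rule freshmans_dream_sum') (simp_all add: char3)

lemma prime_subfield_add:
  "x \<in> prime_subfield \<Longrightarrow> y \<in> prime_subfield \<Longrightarrow> (x + y :: 'a) \<in> prime_subfield"
  using power_three_pow_add[of x y 1] by (simp add: prime_subfield_def)

lemma prime_subfield_diff:
  "x \<in> prime_subfield \<Longrightarrow> y \<in> prime_subfield \<Longrightarrow> (x - y :: 'a) \<in> prime_subfield"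
  using prime_subfield_add[of x "- y"] by (simp add: prime_subfield_minus)

lemma trace3_add: "trace3 s (x + y :: 'a) = trace3 s x + trace3 s y"
  by (simp add: trace3_def power_three_pow_add sum.distrib)

lemma subfield_pm_add:
  "x \<in> subfield_pm m \<Longrightarrow> y \<in> subfield_pm m \<Longrightarrow> (x + y :: 'a) \<in> subfield_pm m"
  by (simp add: subfield_pm_def power_three_pow_add)

lemma one_neq_minus_one: "(1::'a) \<noteq> -1"
proof
  assume "(1::'a) = -1"
  then have "(2::'a) = 0"
    by (metis one_add_one add.right_inverse)
  then show False
    by (simp add: two_eq_minus_one)
qed

text \<open>\<open>g\<close> maps each level set of \<open>\<phi>\<close> injectively into the next one; going round the cycle
  \<open>0 \<rightarrow> 1 \<rightarrow> -1 \<rightarrow> 0\<close> forces the three level sets to have equal size.\<close>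
lemma card_level_set_eq_third:
  fixes \<phi> :: "'b \<Rightarrow> 'a"
  assumes "finite D" and "inj_on g D" and "g ` D \<subseteq> D"
    and "\<And>x. x \<in> D \<Longrightarrow> \<phi> x \<in> prime_subfield"
    and "\<And>x. x \<in> D \<Longrightarrow> \<phi> (g x) = \<phi> x + 1"
    and "v \<in> prime_subfield"
  shows "3 * card {x\<in>D. \<phi> x = v} = card D"
proof -
  define C where "C w = card {x\<in>D. \<phi> x = w}" for w
  have step: "C w \<le> C (w + 1)" for w
  proof -
    have "g ` {x\<in>D. \<phi> x = w} \<subseteq> {x\<in>D. \<phi> x = w + 1}"
      using assms(3,5) by auto
    moreover have "inj_on g {x\<in>D. \<phi> x = w}"
      using assms(2) by (rule inj_on_subset) auto
    ultimately show ?thesis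
      unfolding C_def using assms(1) by (intro card_inj_on_le) auto
  qed
  have "C 0 \<le> C 1" "C 1 \<le> C (-1)" "C (-1) \<le> C 0"
    using step[of 0] step[of 1] step[of "-1"] by (simp_all add: two_eq_minus_one)
  then have equal: "C 0 = C 1" "C 1 = C (-1)"
    by linarith+
  have "D = {x\<in>D. \<phi> x = 0} \<union> {x\<in>D. \<phi> x = 1} \<union> {x\<in>D. \<phi> x = -1}"
    using assms(4) by (auto simp: prime_subfield_iff)
  also have "card \<dots> = C 0 + C 1 + C (-1)"
    unfolding C_def using assms(1) one_neq_minus_one by (simp add: card_Un_disjoint disjoint_iff)
  finally have "card D = C 0 + C 1 + C (-1)" .
  then show ?thesis
    using assms(6) equal by (auto simp: prime_subfield_iff C_def)
qed

lemma product_eq_sum_of_squares: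
  "(c - 1) * (x + y + c + 1)\<^sup>2 + (- 1 - c) * (x + y + c - 1)\<^sup>2
     + (1 - c) * (x - y + c + 1)\<^sup>2 + (1 + c) * (x - y + c - 1)\<^sup>2 = (x * y :: 'a)"
proof -
  have "(c - 1) * (x + y + c + 1)\<^sup>2 + (- 1 - c) * (x + y + c - 1)\<^sup>2
          + (1 - c) * (x - y + c + 1)\<^sup>2 + (1 + c) * (x - y + c - 1)\<^sup>2 = x * y - 3 * (3 * x * y)"
    by (simp add: algebra_simps power2_eq_square)
  then show ?thesis
    by (simp add: three_eq_0)
qed

end

context
  fixes m :: nat
  assumes card_field: "CARD('a::{field,finite}) = 3 ^ (2 * m)"
begin

lemma CHAR_eq_3 [simp]: "CHAR('a) = 3"
proof -
  have prime: "prime CHAR('a)"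
    by (simp add: finite_imp_CHAR_pos prime_CHAR_semidom)
  moreover have "CHAR('a) dvd 3 ^ (2 * m)"
    using CHAR_dvd_CARD[where 'a = 'a] card_field by simp
  ultimately have "CHAR('a) dvd 3"
    by (rule prime_dvd_power)
  then show ?thesis
    using prime by (simp add: primes_dvd_imp_eq)
qed

text \<open>The library's \<open>finite_field_power_card_eq_same\<close> needs the sort \<open>finite_field\<close>, which a
  type variable of sort \<open>{field, finite}\<close> does not carry.\<close>
lemma power_card_eq_same: "(x::'a) ^ 3 ^ (2 * m) = x"
proof (cases "x = 0")
  case False
  let ?U = "UNIV - {0::'a}"
  have "(\<Prod>y\<in>?U. x * y) = \<Prod>?U"
    by (rule prod.reindex_bij_witness[of _ "\<lambda>y. y / x" "\<lambda>y. x * y"]) (use False in auto)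
  then have "x ^ card ?U = 1"
    by (simp add: prod.distrib)
  then have "x ^ Suc (card ?U) = x"
    by (metis power_Suc2 mult_1)
  moreover have "Suc (card ?U) = 3 ^ (2 * m)"
    using card_field finite_UNIV_card_ge_0[where 'a = 'a] by (simp add: card_Diff_singleton)
  ultimately show ?thesis
    by simp
qed simp

lemma power_three_pow_m_twice: "((x::'a) ^ 3 ^ m) ^ 3 ^ m = x"
  using power_card_eq_same[of x] by (simp flip: power_mult power_add add: mult_2)

lemma trace3_power_three: "trace3 (2 * m) ((x::'a) ^ 3) = trace3 (2 * m) x"
proof -
  have "x + trace3 (2 * m) (x ^ 3) = (\<Sum>i<Suc (2 * m). x ^ 3 ^ i)"
    by (simp only: sum.lessThan_Suc_shift) (simp add: trace3_def flip: power_mult)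
  also have "\<dots> = trace3 (2 * m) x + x"
    by (simp add: trace3_def power_card_eq_same)
  finally show ?thesis
    by (simp add: add.commute)
qed

lemma trace3_power_three_pow: "trace3 (2 * m) ((x::'a) ^ 3 ^ k) = trace3 (2 * m) x"
  by (induction k arbitrary: x) (simp_all add: power_mult trace3_power_three)

lemma trace3_in_prime_subfield: "trace3 (2 * m) (x::'a) \<in> prime_subfield"
proof -
  have "trace3 (2 * m) x ^ 3 = (\<Sum>i<2 * m. (x ^ 3 ^ i) ^ 3)"
    using power_three_pow_sum[of "\<lambda>i. x ^ 3 ^ i" "{..<2 * m}" 1] by (simp add: trace3_def)
  also have "\<dots> = trace3 (2 * m) (x ^ 3)"
    by (simp add: trace3_def mult.commute flip: power_mult)
  finally show ?thesis
    by (simp add: prime_subfield_def trace3_power_three)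
qed

lemma norm_in_subfield_pm: "(t::'a) ^ (3 ^ m + 1) \<in> subfield_pm m"
proof -
  have "(t ^ (3 ^ m + 1)) ^ 3 ^ m = (t ^ 3 ^ m) ^ 3 ^ m * t ^ 3 ^ m"
    by (simp add: power_add power_mult_distrib)
  then show ?thesis
    by (simp add: subfield_pm_def power_three_pow_m_twice power_add)
qed

lemma trace3_subfield_pm:
  assumes "(x::'a) \<in> subfield_pm m"
  shows "trace3 (2 * m) x = 2 * (\<Sum>i<m. x ^ 3 ^ i)"
proof -
  have "x ^ 3 ^ (m + i) = x ^ 3 ^ i" for i
  proof -
    have "x ^ 3 ^ (m + i) = (x ^ 3 ^ m) ^ 3 ^ i"
      by (simp only: power_add power_mult)
    then show ?thesis
      using assms by (simp add: subfield_pm_def)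
  qed
  then show ?thesis
    unfolding trace3_def mult_2 sum_lessThan_add by simp
qed

lemma sum_card_norm_fibres:
  "(\<Sum>u\<in>subfield_pm m - {0}. card {t::'a. t ^ (3 ^ m + 1) = u}) = 3 ^ m * 3 ^ m - 1"
proof -
  have "(\<Sum>u\<in>subfield_pm m - {0}. card {t::'a. t ^ (3 ^ m + 1) = u})
          = card (\<Union>u\<in>subfield_pm m - {0}. {t::'a. t ^ (3 ^ m + 1) = u})"
    by (rule card_UN_disjoint[symmetric]) auto
  also have "(\<Union>u\<in>subfield_pm m - {0}. {t::'a. t ^ (3 ^ m + 1) = u}) = UNIV - {0}"
    using norm_in_subfield_pm by auto
  also have "card (UNIV - {0::'a}) = 3 ^ m * 3 ^ m - 1"
    using card_field by (simp add: card_Diff_singleton flip: power_add mult_2)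
  finally show ?thesis .
qed

text \<open>The norm map \<open>t \<mapsto> t\<^bsup>q+1\<^esup>\<close> sends the \<open>q\<^sup>2 - 1\<close> nonzero elements into \<open>\<bbbF>\<^sub>q\<^sup>*\<close>
  with fibres of size at most \<open>q + 1\<close>, while \<open>|\<bbbF>\<^sub>q| \<le> q\<close>: both bounds must be attained.\<close>
lemma card_subfield_pm:
  assumes "1 \<le> m"
  shows "card (subfield_pm m :: 'a set) = 3 ^ m"
proof -
  let ?S = "subfield_pm m :: 'a set" and ?q = "3 ^ m :: nat"
  have zero: "0 \<in> ?S"
    by (simp add: subfield_pm_def power_0_left)
  have "(?q - 1) * (?q + 1) = (\<Sum>u\<in>?S - {0}. card {t. t ^ (?q + 1) = u})"
    using sum_card_norm_fibres by (simp add: algebra_simps diff_mult_distrib)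
  also have "\<dots> \<le> (\<Sum>u\<in>?S - {0}. ?q + 1)"
    by (intro sum_mono card_power_eq_le) simp
  also have "\<dots> = (card ?S - 1) * (?q + 1)"
    using zero by (simp add: card_Diff_singleton)
  finally have "?q - 1 \<le> card ?S - 1"
    by (subst (asm) mult_le_cancel2) simp
  moreover have "card ?S \<ge> 1"
    using zero by (metis card_0_eq empty_iff finite less_one not_le)
  ultimately show ?thesis
    using card_subfield_pm_le[OF assms, where 'a = 'a] by linarith
qed

lemma card_norm_fibre:
  assumes "1 \<le> m" and "u \<in> subfield_pm m - {0}"
  shows "card {t::'a. t ^ (3 ^ m + 1) = u} = 3 ^ m + 1"
proof (rule ccontr)
  let ?S = "subfield_pm m :: 'a set" and ?q = "3 ^ m :: nat"
  assume "card {t::'a. t ^ (?q + 1) = u} \<noteq> ?q + 1"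
  then have "card {t::'a. t ^ (?q + 1) = u} < ?q + 1"
    using card_power_eq_le[of "?q + 1" u] by simp
  then have "(\<Sum>u\<in>?S - {0}. card {t. t ^ (?q + 1) = u}) < (\<Sum>u\<in>?S - {0}. ?q + 1)"
    using assms(2) card_power_eq_le[of "?q + 1", where 'a = 'a] by (intro sum_strict_mono_ex1) auto
  also have "\<dots> = (?q - 1) * (?q + 1)"
    using card_subfield_pm[OF assms(1)] by (simp add: card_Diff_singleton subfield_pm_def power_0_left)
  also have "\<dots> = ?q * ?q - 1"
    by (simp add: algebra_simps diff_mult_distrib)
  finally show False
    using sum_card_norm_fibres by simp
qed

lemma exists_trace3_eq_1:
  assumes "1 \<le> m"
  obtains z :: 'a where "z \<in> subfield_pm m" and "trace3 (2 * m) z = 1"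
proof -
  have "(3::nat) ^ (m - 1) < 3 ^ m"
    using assms by simp
  then have "card {x::'a. (\<Sum>i<m. x ^ 3 ^ i) = 0} < card (subfield_pm m :: 'a set)"
    using card_sum_power_three_pow_eq_0_le[OF assms, where 'a = 'a] card_subfield_pm[OF assms]
    by linarith
  then obtain x :: 'a where x: "x \<in> subfield_pm m" "(\<Sum>i<m. x ^ 3 ^ i) \<noteq> 0"
    by (metis (mono_tags, lifting) card_mono finite mem_Collect_eq not_le subsetI)
  then have "trace3 (2 * m) x \<noteq> 0"
    by (simp add: trace3_subfield_pm two_eq_minus_one)
  then have "trace3 (2 * m) x = 1 \<or> trace3 (2 * m) (- x) = 1"
    using trace3_in_prime_subfield[of x] by (auto simp: prime_subfield_iff trace3_minus)
  then show ?thesis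
    using that x(1) subfield_pm_minus by blast
qed

lemma card_trace3_level:
  assumes "1 \<le> m" and "(b::'a) \<noteq> 0" and "v \<in> prime_subfield"
  shows "3 * card {t::'a. trace3 (2 * m) (b * t) = v} = 3 ^ (2 * m)"
proof -
  obtain z :: 'a where z: "trace3 (2 * m) z = 1"
    using exists_trace3_eq_1[OF assms(1)] by blast
  have "3 * card {t\<in>UNIV. trace3 (2 * m) (b * t) = v} = card (UNIV :: 'a set)"
    by (rule card_level_set_eq_third[where g = "\<lambda>t. t + z / b"])
       (use assms z in \<open>auto simp: distrib_left trace3_add trace3_in_prime_subfield\<close>)
  then show ?thesis
    using card_field by simp
qed

lemma card_trace3_subfield_level:
  assumes "1 \<le> m" and "a \<in> subfield_pm m" "(a::'a) \<noteq> 0" and "v \<in> prime_subfield"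
  shows "3 * card {u\<in>subfield_pm m. trace3 (2 * m) (a * u) = v} = 3 ^ m"
proof -
  obtain z :: 'a where z: "z \<in> subfield_pm m" "trace3 (2 * m) z = 1"
    using exists_trace3_eq_1[OF assms(1)] by blast
  have "3 * card {u\<in>subfield_pm m. trace3 (2 * m) (a * u) = v} = card (subfield_pm m :: 'a set)"
    by (rule card_level_set_eq_third[where g = "\<lambda>u. u + z / a"])
       (use assms z in \<open>auto simp: distrib_left trace3_add trace3_in_prime_subfield
          subfield_pm_add subfield_pm_divide\<close>)
  then show ?thesis
    using card_subfield_pm[OF assms(1)] by simp
qed

lemma card_trace3_norm_level:
  assumes "1 \<le> m" and "a \<in> subfield_pm m" "(a::'a) \<noteq> 0" and "v \<in> prime_subfield"
  shows "3 * card {t::'a. trace3 (2 * m) (a * t ^ (3 ^ m + 1)) = v} =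
           (if v = 0 then 3 ^ (2 * m) - 2 * 3 ^ m else 3 ^ (2 * m) + 3 ^ m)"
proof -
  let ?q = "3 ^ m :: nat"
  define A where "A = {u\<in>subfield_pm m. trace3 (2 * m) (a * u) = v}"
  have A: "3 * card A = ?q"
    unfolding A_def by (rule card_trace3_subfield_level[OF assms])
  have "{t. trace3 (2 * m) (a * t ^ (?q + 1)) = v} = (\<Union>u\<in>A. {t::'a. t ^ (?q + 1) = u})"
    using norm_in_subfield_pm by (auto simp: A_def)
  then have "card {t. trace3 (2 * m) (a * t ^ (?q + 1)) = v}
      = (\<Sum>u\<in>A. card {t::'a. t ^ (?q + 1) = u})"
    by (simp add: card_UN_disjoint disjoint_iff)
  also have "\<dots> = (\<Sum>u\<in>A. if u = 0 then 1 else ?q + 1)"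
    by (rule sum.cong) (use card_norm_fibre[OF assms(1)] in \<open>auto simp: A_def\<close>)
  finally have level: "card {t. trace3 (2 * m) (a * t ^ (?q + 1)) = v}
      = (\<Sum>u\<in>A. if u = 0 then 1 else ?q + 1)" .
  have square: "(3::nat) ^ (2 * m) = ?q * ?q"
    by (simp flip: power_add add: mult_2)
  show ?thesis
  proof (cases "v = 0")
    case True
    then have "0 \<in> A"
      by (simp add: A_def subfield_pm_def power_0_left)
    then obtain k where k: "card A = Suc k"
      by (metis card_Suc_Diff1 finite)
    have "(\<Sum>u\<in>A. if u = 0 then 1 else ?q + 1) = 1 + k * (?q + 1)"
      using \<open>0 \<in> A\<close> k by (simp add: sum.remove card_Diff_singleton)
    moreover have "?q = 3 * k + 3"
      using A k by simp
    ultimately have "3 * card {t. trace3 (2 * m) (a * t ^ (?q + 1)) = v} + 2 * ?q = ?q * ?q"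
      unfolding level by (simp add: algebra_simps)
    then show ?thesis
      using True square by simp
  next
    case False
    then have "0 \<notin> A"
      by (simp add: A_def)
    then have "(\<Sum>u\<in>A. if u = 0 then 1 else ?q + 1) = (\<Sum>u\<in>A. ?q + 1)"
      by (intro sum.cong) auto
    then have "3 * card {t. trace3 (2 * m) (a * t ^ (?q + 1)) = v} = ?q * ?q + ?q"
      unfolding level using A by (simp add: algebra_simps)
    then show ?thesis
      using False square by simp
  qed
qed

lemma hweight_quadratic_codeword:
  assumes "1 \<le> m" and "a \<in> subfield_pm m" "(a::'a) \<noteq> 0" and "e \<in> prime_subfield"
  shows "3 * hweight (\<lambda>t. trace3 (2 * m) (a * (t + s) ^ (3 ^ m + 1)) + e) =
           (if e = 0 then 2 * 3 ^ (2 * m) + 2 * 3 ^ m else 2 * 3 ^ (2 * m) - 3 ^ m)"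
proof -
  let ?Q = "\<lambda>t. trace3 (2 * m) (a * t ^ (3 ^ m + 1))"
  have "hweight (\<lambda>t. ?Q (t + s) + e) + card {t. ?Q t = - e} = 3 ^ (2 * m)"
    using hweight_translate[of "\<lambda>t. ?Q t + e" s] hweight_add_card_zeros[of "\<lambda>t. ?Q t + e"]
      card_field by (simp add: add_eq_0_iff2)
  moreover have "3 * card {t. ?Q t = - e} =
      (if e = 0 then 3 ^ (2 * m) - 2 * 3 ^ m else 3 ^ (2 * m) + 3 ^ m)"
    using card_trace3_norm_level[OF assms(1-3) prime_subfield_minus[OF assms(4)]] by simp
  moreover have "3 * 3 ^ m \<le> (3::nat) ^ (2 * m)"
    using assms(1) by (rule three_mult_three_pow_le)
  ultimately show ?thesis
    by auto
qed

lemma hweight_affine_codeword: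
  assumes "1 \<le> m" and "(b::'a) \<noteq> 0" and "h \<in> prime_subfield"
  shows "3 * hweight (\<lambda>t. trace3 (2 * m) (b * t) + h) = 2 * 3 ^ (2 * m)"
proof -
  have "hweight (\<lambda>t. trace3 (2 * m) (b * t) + h) + card {t. trace3 (2 * m) (b * t) = - h}
      = 3 ^ (2 * m)"
    using hweight_add_card_zeros[of "\<lambda>t. trace3 (2 * m) (b * t) + h"] card_field
    by (simp add: add_eq_0_iff2)
  moreover have "3 * card {t. trace3 (2 * m) (b * t) = - h} = 3 ^ (2 * m)"
    using assms by (intro card_trace3_level prime_subfield_minus)
  ultimately show ?thesis
    by linarith
qed

text \<open>The two cross terms of \<open>(t + s)\<^bsup>q+1\<^esup> = (t\<^sup>q + s\<^sup>q)(t + s)\<close> are conjugate under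
  \<open>x \<mapsto> x\<^sup>q\<close>, which preserves the trace.\<close>
lemma trace3_norm_translate:
  assumes "a \<in> subfield_pm m"
  shows "trace3 (2 * m) (a * (t + s) ^ (3 ^ m + 1)) =
    trace3 (2 * m) (a * t ^ (3 ^ m + 1)) + trace3 (2 * m) (2 * a * s ^ 3 ^ m * t)
      + trace3 (2 * m) (a * s ^ (3 ^ m + 1) :: 'a)"
proof -
  let ?T = "trace3 (2 * m) :: 'a \<Rightarrow> 'a"
  have conjugate: "?T (a * t ^ 3 ^ m * s) = ?T (a * s ^ 3 ^ m * t)"
  proof -
    have "(a * t ^ 3 ^ m * s) ^ 3 ^ m = a * s ^ 3 ^ m * t"
      using assms by (simp add: subfield_pm_def power_mult_distrib power_three_pow_m_twice mult_ac)
    then show ?thesis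
      by (metis trace3_power_three_pow)
  qed
  have expansion: "a * (t + s) ^ (3 ^ m + 1)
      = a * t ^ (3 ^ m + 1) + a * t ^ 3 ^ m * s + a * s ^ 3 ^ m * t + a * s ^ (3 ^ m + 1)"
    by (simp add: power_add power_three_pow_add algebra_simps)
  have double: "2 * a * s ^ 3 ^ m * t = a * s ^ 3 ^ m * t + a * s ^ 3 ^ m * t"
    by (simp add: algebra_simps)
  show ?thesis
    unfolding expansion double by (simp only: trace3_add[OF CHAR_eq_3] conjugate add_ac)
qed

lemma trace3_norm_complete_square:
  assumes "a \<in> subfield_pm m" and "(a::'a) \<noteq> 0"
  shows "trace3 (2 * m) (a * (t + (b / (2 * a)) ^ 3 ^ m) ^ (3 ^ m + 1)) =
    trace3 (2 * m) (a * t ^ (3 ^ m + 1)) + trace3 (2 * m) (b * t)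
      + trace3 (2 * m) (a * (b / (2 * a)) ^ (3 ^ m + 1))"
proof -
  let ?r = "b / (2 * a)"
  have "2 * a * (?r ^ 3 ^ m) ^ 3 ^ m = b"
    using assms(2) by (simp add: power_three_pow_m_twice two_eq_minus_one)
  moreover have "(?r ^ 3 ^ m) ^ (3 ^ m + 1) = (?r ^ (3 ^ m + 1)) ^ 3 ^ m"
    by (simp only: mult.commute flip: power_mult)
  moreover have "\<dots> = ?r ^ (3 ^ m + 1)"
    using norm_in_subfield_pm[of ?r] by (simp add: subfield_pm_def)
  ultimately show ?thesis
    using trace3_norm_translate[OF assms(1), of t "?r ^ 3 ^ m"] by simp
qed

lemma quadratic_codeword_in_code_C:
  assumes "a \<in> subfield_pm m" and "e \<in> prime_subfield"
  shows "(\<lambda>t. trace3 (2 * m) (a * (t + s) ^ (3 ^ m + 1)) + e) \<in> (code_C m :: ('a \<Rightarrow> 'a) set)"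
proof -
  have "(\<lambda>t. trace3 (2 * m) (a * (t + s) ^ (3 ^ m + 1)) + e) =
        (\<lambda>t. trace3 (2 * m) (a * t ^ (3 ^ m + 1) + 2 * a * s ^ 3 ^ m * t)
               + (trace3 (2 * m) (a * s ^ (3 ^ m + 1)) + e))"
    using trace3_norm_translate[OF assms(1)] by (simp add: trace3_add add_ac)
  moreover have "trace3 (2 * m) (a * s ^ (3 ^ m + 1)) + e \<in> prime_subfield"
    using assms(2) by (simp add: prime_subfield_add trace3_in_prime_subfield)
  ultimately show ?thesis
    using assms(1) unfolding code_C_def by blast
qed

lemma code_C_hweight_ge:
  assumes "1 \<le> m" and "c \<in> (code_C m :: ('a \<Rightarrow> 'a) set)" and "c \<noteq> (\<lambda>_. 0)"
  shows "2 * 3 ^ (2 * m) - 3 ^ m \<le> 3 * hweight c"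
proof -
  obtain a b h where c: "c = (\<lambda>t. trace3 (2 * m) (a * t ^ (3 ^ m + 1) + b * t) + h)"
    and a: "a \<in> subfield_pm m" and h: "h \<in> prime_subfield"
    using assms(2) unfolding code_C_def by blast
  consider "a = 0" "b = 0" | "a = 0" "b \<noteq> 0" | "a \<noteq> 0"
    by blast
  then show ?thesis
  proof cases
    case 1
    then have "c = (\<lambda>_. h)" and "h \<noteq> 0"
      using assms(3) by (auto simp: c)
    then have "hweight c = 3 ^ (2 * m)"
      using card_field by (simp add: hweight_def)
    then show ?thesis
      by simp
  next
    case 2
    then show ?thesis
      using hweight_affine_codeword[OF assms(1) _ h, of b] by (simp add: c)
  next
    case 3
    define e where "e = h - trace3 (2 * m) (a * (b / (2 * a)) ^ (3 ^ m + 1))"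
    have "c = (\<lambda>t. trace3 (2 * m) (a * (t + (b / (2 * a)) ^ 3 ^ m) ^ (3 ^ m + 1)) + e)"
      unfolding c e_def trace3_norm_complete_square[OF a 3] trace3_add[OF CHAR_eq_3]
      by (simp add: add.assoc)
    moreover have "e \<in> prime_subfield"
      using h by (simp add: e_def prime_subfield_diff trace3_in_prime_subfield)
    ultimately have "3 * hweight c =
        (if e = 0 then 2 * 3 ^ (2 * m) + 2 * 3 ^ m else 2 * 3 ^ (2 * m) - 3 ^ m)"
      using hweight_quadratic_codeword[OF assms(1) a 3] by presburger
    then show ?thesis
      by auto
  qed
qed

lemma min_weight_eq:
  assumes "1 \<le> m"
  shows "3 * min_weight TYPE('a) m = 2 * 3 ^ (2 * m) - 3 ^ m"
proof -
  let ?c = "\<lambda>t::'a. trace3 (2 * m) (t ^ (3 ^ m + 1)) + 1"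
  have one: "(1::'a) \<in> subfield_pm m"
    by (simp add: subfield_pm_def)
  have weight: "3 * hweight ?c = 2 * 3 ^ (2 * m) - 3 ^ m"
    using hweight_quadratic_codeword[OF assms one _ one_in_prime_subfield, of 0] by simp
  moreover have "3 * 3 ^ m \<le> (3::nat) ^ (2 * m)" and "0 < (3::nat) ^ m"
    using assms by (simp_all add: three_mult_three_pow_le)
  ultimately have "hweight ?c \<noteq> 0"
    by linarith
  then have "?c \<noteq> (\<lambda>_. 0)"
    by (simp add: hweight_eq_0_iff)
  moreover have "?c \<in> code_C m"
    using quadratic_codeword_in_code_C[OF one one_in_prime_subfield, of 0] by simp
  ultimately have "min_weight TYPE('a) m = hweight ?c"
    unfolding min_weight_def
    by (intro Least_equality) (use weight code_C_hweight_ge[OF assms] in fastforce)+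
  then show ?thesis
    using weight by simp
qed

lemma quadratic_support_in_blocks:
  assumes "1 \<le> m" and "a \<in> subfield_pm m" "(a::'a) \<noteq> 0" and "e \<in> prime_subfield" "e \<noteq> 0"
  shows "{t. trace3 (2 * m) (a * (t + s) ^ (3 ^ m + 1)) + e \<noteq> 0} \<in> blocks_Dd m"
proof -
  let ?c = "\<lambda>t. trace3 (2 * m) (a * (t + s) ^ (3 ^ m + 1)) + e"
  have "3 * hweight ?c = 2 * 3 ^ (2 * m) - 3 ^ m"
    using hweight_quadratic_codeword[OF assms(1-4), of s] assms(5) by simp
  moreover have "3 * 3 ^ m \<le> (3::nat) ^ (2 * m)" and "0 < (3::nat) ^ m"
    using assms(1) by (simp_all add: three_mult_three_pow_le)
  ultimately have "hweight ?c \<noteq> 0" and "hweight ?c = min_weight TYPE('a) m"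
    using min_weight_eq[OF assms(1)] by linarith+
  then show ?thesis
    using quadratic_codeword_in_code_C[OF assms(2,4)]
    unfolding blocks_Dd_def mem_Collect_eq by (intro exI[of _ ?c]) (simp add: hweight_eq_0_iff)
qed

lemma design_code_add:
  assumes "f \<in> (design_code m :: ('a \<Rightarrow> 'a) set)" and "g \<in> design_code m"
  shows "(\<lambda>t. f t + g t) \<in> design_code m"
proof -
  obtain k1 where f: "f = (\<lambda>t. \<Sum>B\<in>blocks_Dd m. k1 B * incidence_vec B t)"
    and k1: "\<forall>B. k1 B \<in> prime_subfield"
    using assms(1) unfolding design_code_def by blast
  obtain k2 where g: "g = (\<lambda>t. \<Sum>B\<in>blocks_Dd m. k2 B * incidence_vec B t)"
    and k2: "\<forall>B. k2 B \<in> prime_subfield"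
    using assms(2) unfolding design_code_def by blast
  have "(\<lambda>t. f t + g t) = (\<lambda>t. \<Sum>B\<in>blocks_Dd m. (k1 B + k2 B) * incidence_vec B t)"
    by (simp add: f g sum.distrib distrib_right)
  moreover have "\<forall>B. k1 B + k2 B \<in> prime_subfield"
    using k1 k2 by (simp add: prime_subfield_add)
  ultimately show ?thesis
    unfolding design_code_def mem_Collect_eq by (intro exI[of _ "\<lambda>B. k1 B + k2 B"]) simp
qed

lemma block_multiple_in_design_code:
  assumes "B \<in> (blocks_Dd m :: 'a set set)" and "k \<in> prime_subfield"
  shows "(\<lambda>t. k * incidence_vec B t) \<in> design_code m"
proof -
  let ?k = "\<lambda>B'. if B' = B then k else 0"
  have "?k B' * incidence_vec B' t = (if B' = B then k * incidence_vec B t else 0)" for B' t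
    by simp
  then have "(\<lambda>t. k * incidence_vec B t) = (\<lambda>t. \<Sum>B'\<in>blocks_Dd m. ?k B' * incidence_vec B' t)"
    using assms(1) by (simp add: sum.delta')
  moreover have "\<forall>B'. ?k B' \<in> prime_subfield"
    using assms(2) by simp
  ultimately show ?thesis
    unfolding design_code_def mem_Collect_eq by (intro exI[of _ ?k]) simp
qed

lemma square_in_design_code:
  assumes "1 \<le> m" and "a \<in> subfield_pm m" "(a::'a) \<noteq> 0" and "e \<in> prime_subfield" "e \<noteq> 0"
    and "k \<in> prime_subfield"
  shows "(\<lambda>t. k * (trace3 (2 * m) (a * (t + s) ^ (3 ^ m + 1)) + e)\<^sup>2) \<in> design_code m"
  using block_multiple_in_design_code[OF quadratic_support_in_blocks[OF assms(1-5)] assms(6)]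
  by (simp add: incidence_vec_support prime_subfield_add trace3_in_prime_subfield assms(4))

end

theorem lemma3p9:
  fixes m :: nat and a b :: "'a::{field,finite}"
  assumes "m \<ge> 2"
    and "CARD('a) = 3 ^ (2 * m)"
    and "a \<in> subfield_pm m" and "a \<noteq> 0"
  shows "(\<lambda>t. trace3 (2*m) (a * t ^ (3 ^ m + 1)) * trace3 (2*m) (b * t)) \<in> design_code m"
proof -
  let ?T = "trace3 (2 * m) :: 'a \<Rightarrow> 'a"
  define Q where "Q t = ?T (a * t ^ (3 ^ m + 1))" for t
  define L where "L t = ?T (b * t)" for t
  define c where "c = ?T (a * (b / (2 * a)) ^ (3 ^ m + 1))"
  have m: "1 \<le> m"
    using assms(1) by simp
  have char: "CHAR('a) = 3"
    using assms(2) by (rule CHAR_eq_3)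
  have c: "c \<in> prime_subfield"
    unfolding c_def using assms(2) by (rule trace3_in_prime_subfield)
  have plus: "(\<lambda>t. k * (Q t + L t + c + e)\<^sup>2) \<in> design_code m"
    if "k \<in> prime_subfield" "e \<in> prime_subfield" "e \<noteq> 0" for k e
    using square_in_design_code[OF assms(2) m assms(3,4) that(2,3,1), of "(b / (2 * a)) ^ 3 ^ m"]
    unfolding trace3_norm_complete_square[OF assms(2-4)] Q_def L_def c_def .
  have minus: "(\<lambda>t. k * (Q t - L t + c + e)\<^sup>2) \<in> design_code m"
    if "k \<in> prime_subfield" "e \<in> prime_subfield" "e \<noteq> 0" for k e
    using square_in_design_code[OF assms(2) m assms(3,4) that(2,3,1), of "(- b / (2 * a)) ^ 3 ^ m"]
    unfolding trace3_norm_complete_square[OF assms(2-4)]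
    by (simp add: Q_def L_def c_def trace3_minus power_minus_even)
  have "(\<lambda>t. (c - 1) * (Q t + L t + c + 1)\<^sup>2 + (- 1 - c) * (Q t + L t + c + - 1)\<^sup>2
      + (1 - c) * (Q t - L t + c + 1)\<^sup>2 + (1 + c) * (Q t - L t + c + - 1)\<^sup>2) \<in> design_code m"
    using c by (intro design_code_add[OF assms(2)] plus minus)
      (simp_all add: char prime_subfield_add prime_subfield_diff)
  then show ?thesis
    using product_eq_sum_of_squares[OF char] by (simp add: Q_def L_def)
qed

end
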